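(* Let $X$ be a graph with real symmetric Hamiltonian $M$ whose entries are algebraic integers, with spectral decomposition $M=\sum_\lambda\lambda E_\lambda$. Suppose perfect state transfer occurs from vertex $a$ to vertex $\alpha\neq a$ at time $\tau$, and that a vertex $v\notin\{a,\alpha\}$ is periodic at time $\tau$. Let $s\in\mathbb{Q}\setminus\{0\}$. Then perfect state transfer occurs from $\mathbf e_a+s\mathbf e_v$ to $\mathbf e_\alpha+s\mathbf e_v$ at time $\tau$ if and only if there exist $\lambda\in\Phi^+_{\mathbf e_a,\mathbf e_\alpha}$ and $\lambda'\in\Phi_{\mathbf e_v}$ such that $\lambda\tau\equiv\lambda'\tau\pmod{2\pi}$.
   Context: $U(t)=e^{-\mathrm{i}tM}$. Perfect state transfer from $\mathbf u$ to $\boldsymbol\mu$ at time $\tau$: $U(\tau)\mathbf u=\eta\boldsymbol\mu$ with $|\eta|=1$; vertex $v$ is periodic at $\tau$ if $U(\tau)\mathbf e_v=\eta\mathbf e_v$ with $|\eta|=1$. $\Phi_{\mathbf v}=\{\lambda:E_\lambda\mathbf v\neq\mathbf 0\}$ is the eigenvalue support, and $\Phi^+_{\mathbf e_a,\mathbf e_\alpha}=\{\lambda: E_\lambda\mathbf e_a=E_\lambda\mathbf e_\alpha\neq\mathbf 0\}$. *)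

theory Defs
  imports "HOL-Analysis.Analysis" "HOL-Computational_Algebra.Polynomial"
begin

definition cmat :: "real^'n^'m \<Rightarrow> complex^'n^'m" where
  "cmat A = (\<chi> i j. complex_of_real (A $ i $ j))"

definition cvec :: "real^'n \<Rightarrow> complex^'n" where
  "cvec x = (\<chi> i. complex_of_real (x $ i))"

definition mpow :: "'a::comm_ring_1^'n^'n \<Rightarrow> nat \<Rightarrow> 'a^'n^'n" where
  "mpow A k = (((**) A) ^^ k) (mat 1)"

definition transition :: "real^'n^'n \<Rightarrow> real \<Rightarrow> complex^'n^'n" where
  "transition M t = (\<chi> i j. (\<Sum>k. ((- \<i> * complex_of_real t) ^ k / of_nat (fact k))
                                   * (mpow (cmat M) k) $ i $ j))"

definition evec :: "'n::finite \<Rightarrow> 'a::zero_neq_one^'n" where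
  "evec v = axis v 1"

definition pst :: "real^'n^'n \<Rightarrow> complex^'n \<Rightarrow> complex^'n \<Rightarrow> real \<Rightarrow> bool" where
  "pst M u mu tau \<longleftrightarrow> (\<exists>eta. cmod eta = 1 \<and> transition M tau *v u = eta *s mu)"

definition periodic_vertex :: "real^'n^'n \<Rightarrow> 'n \<Rightarrow> real \<Rightarrow> bool" where
  "periodic_vertex M v tau \<longleftrightarrow>
     (\<exists>eta. cmod eta = 1 \<and> transition M tau *v evec v = eta *s evec v)"

definition spectral_decomp :: "real^'n^'n \<Rightarrow> real set \<Rightarrow> (real \<Rightarrow> real^'n^'n) \<Rightarrow> bool" where
  "spectral_decomp M Lam E \<longleftrightarrow>
     finite Lam \<and>
     (\<forall>l\<in>Lam. E l \<noteq> 0 \<and> transpose (E l) = E l \<and> E l ** E l = E l) \<and>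
     (\<forall>l\<in>Lam. \<forall>l'\<in>Lam. l \<noteq> l' \<longrightarrow> E l ** E l' = 0) \<and>
     (\<Sum>l\<in>Lam. E l) = mat 1 \<and>
     M = (\<Sum>l\<in>Lam. l *\<^sub>R E l)"

definition eig_support :: "real set \<Rightarrow> (real \<Rightarrow> real^'n^'n) \<Rightarrow> real^'n \<Rightarrow> real set" where
  "eig_support Lam E x = {l \<in> Lam. E l *v x \<noteq> 0}"

definition eig_support_plus :: "real set \<Rightarrow> (real \<Rightarrow> real^'n^'n) \<Rightarrow> 'n \<Rightarrow> 'n \<Rightarrow> real set" where
  "eig_support_plus Lam E a b =
     {l \<in> Lam. E l *v evec a = E l *v evec b \<and> E l *v evec a \<noteq> 0}"

end

theory Submission
  imports Defs
begin

text \<open>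
  By the spectral decomposition, \<open>E\<^sub>\<lambda> U(\<tau>) = exp(-i\<lambda>\<tau>) E\<^sub>\<lambda>\<close>. Hence if
  \<open>U(\<tau>) e\<^sub>a = \<eta> e\<^sub>\<alpha>\<close>, then \<open>exp(-i\<lambda>\<tau>) = \<eta>\<close> for every \<open>\<lambda> \<in> \<Phi>\<^sup>+\<close>, and if
  \<open>U(\<tau>) e\<^sub>v = \<gamma> e\<^sub>v\<close>, then \<open>exp(-i\<lambda>\<tau>) = \<gamma>\<close> for every \<open>\<lambda> \<in> \<Phi>\<^sub>v\<close>. Since
  \<open>U(\<tau>)(e\<^sub>a + s e\<^sub>v) = \<eta> e\<^sub>\<alpha> + s \<gamma> e\<^sub>v\<close>, perfect state transfer between the perturbed
  states happens exactly when \<open>\<eta> = \<gamma>\<close>, i.e. when the common phases on the two (nonempty)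
  supports agree.
\<close>

lemma spectral_decomp_finite: "spectral_decomp M Lam E \<Longrightarrow> finite Lam"
  by (simp add: spectral_decomp_def)

lemma spectral_decomp_sum_eq_id: "spectral_decomp M Lam E \<Longrightarrow> (\<Sum>l\<in>Lam. E l) = mat 1"
  by (simp add: spectral_decomp_def)

lemma spectral_decomp_sum_entry:
  assumes "spectral_decomp M Lam E"
  shows "(\<Sum>l\<in>Lam. E l $ i $ j) = (if i = j then 1 else 0)"
  using arg_cong[where f = "\<lambda>A. A $ i $ j", OF spectral_decomp_sum_eq_id[OF assms]]
  by (simp add: sum_component mat_def)

lemma spectral_decomp_mult_entry:
  assumes "spectral_decomp M Lam E" "l \<in> Lam" "l' \<in> Lam"
  shows "(\<Sum>m\<in>UNIV. E l $ i $ m * E l' $ m $ j) = (if l = l' then E l $ i $ j else 0)"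
proof -
  have "(\<Sum>m\<in>UNIV. E l $ i $ m * E l' $ m $ j) = (E l ** E l') $ i $ j"
    by (simp add: matrix_matrix_mult_def)
  then show ?thesis
    using assms unfolding spectral_decomp_def by auto
qed

lemma spectral_sum_mult:
  assumes sd: "spectral_decomp M Lam E"
  shows "(\<Sum>l\<in>Lam. f l *\<^sub>R E l) ** (\<Sum>l\<in>Lam. g l *\<^sub>R E l) = (\<Sum>l\<in>Lam. (f l * g l) *\<^sub>R E l)"
proof -
  have fin: "finite Lam"
    using sd by (rule spectral_decomp_finite)
  have "((\<Sum>l\<in>Lam. f l *\<^sub>R E l) ** (\<Sum>l\<in>Lam. g l *\<^sub>R E l)) $ i $ j
        = (\<Sum>l\<in>Lam. (f l * g l) *\<^sub>R E l) $ i $ j" for i j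
  proof -
    have "((\<Sum>l\<in>Lam. f l *\<^sub>R E l) ** (\<Sum>l\<in>Lam. g l *\<^sub>R E l)) $ i $ j
        = (\<Sum>m\<in>UNIV. \<Sum>l\<in>Lam. \<Sum>l'\<in>Lam. f l * g l' * (E l $ i $ m * E l' $ m $ j))"
      by (simp add: matrix_matrix_mult_def sum_component sum_product mult_ac)
    also have "\<dots> = (\<Sum>l\<in>Lam. \<Sum>l'\<in>Lam. f l * g l' * (\<Sum>m\<in>UNIV. E l $ i $ m * E l' $ m $ j))"
      by (simp add: sum_distrib_left sum.swap[of _ UNIV])
    also have "\<dots> = (\<Sum>l\<in>Lam. \<Sum>l'\<in>Lam. f l * g l' * (if l = l' then E l $ i $ j else 0))"
      by (intro sum.cong refl) (simp add: spectral_decomp_mult_entry[OF sd])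
    also have "\<dots> = (\<Sum>l\<in>Lam. (f l * g l) *\<^sub>R E l) $ i $ j"
      by (simp add: fin sum_component if_distrib sum.delta cong: if_cong)
    finally show ?thesis .
  qed
  then show ?thesis
    by (simp add: vec_eq_iff)
qed

lemma mpow_0 [simp]: "mpow A 0 = mat 1"
  by (simp add: mpow_def)

lemma mpow_Suc [simp]: "mpow A (Suc k) = A ** mpow A k"
  by (simp add: mpow_def)

lemma mpow_spectral:
  assumes sd: "spectral_decomp M Lam E"
  shows "mpow M k = (\<Sum>l\<in>Lam. (l ^ k) *\<^sub>R E l)"
proof (induction k)
  case 0
  then show ?case
    using spectral_decomp_sum_eq_id[OF sd] by simp
next
  case (Suc k)
  have "M = (\<Sum>l\<in>Lam. l *\<^sub>R E l)"
    using sd by (simp add: spectral_decomp_def)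
  then show ?case
    using Suc by (simp add: spectral_sum_mult[OF sd])
qed

lemma cmat_mult: "cmat (A ** B) = cmat A ** cmat B"
  by (simp add: vec_eq_iff cmat_def matrix_matrix_mult_def)

lemma cmat_mat_1: "cmat (mat 1) = mat 1"
  by (simp add: vec_eq_iff cmat_def mat_def)

lemma mpow_cmat: "mpow (cmat A) k = cmat (mpow A k)"
  by (induction k) (simp_all add: cmat_mat_1 cmat_mult)

lemma transition_spectral:
  assumes sd: "spectral_decomp M Lam E"
  shows "transition M t $ i $ j
         = (\<Sum>l\<in>Lam. exp (- \<i> * complex_of_real (t * l)) * complex_of_real (E l $ i $ j))"
proof -
  define c where "c = - \<i> * complex_of_real t"
  have "(\<lambda>k. \<Sum>l\<in>Lam. ((c * complex_of_real l) ^ k /\<^sub>R fact k) * complex_of_real (E l $ i $ j))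
        sums (\<Sum>l\<in>Lam. exp (c * complex_of_real l) * complex_of_real (E l $ i $ j))"
    by (intro sums_sum sums_mult2 exp_converges)
  moreover have "mpow (cmat M) k $ i $ j = (\<Sum>l\<in>Lam. complex_of_real (l ^ k * E l $ i $ j))" for k
    unfolding mpow_cmat mpow_spectral[OF sd] by (simp add: cmat_def sum_component)
  then have "(\<Sum>l\<in>Lam. ((c * complex_of_real l) ^ k /\<^sub>R fact k) * complex_of_real (E l $ i $ j))
        = c ^ k / of_nat (fact k) * mpow (cmat M) k $ i $ j" for k
    by (simp add: sum_distrib_left scaleR_conv_of_real power_mult_distrib divide_inverse mult_ac)
  ultimately show ?thesis
    by (simp add: transition_def c_def sums_iff mult.assoc)
qed

lemma spectral_projection_transition:
  assumes sd: "spectral_decomp M Lam E" and m: "m \<in> Lam"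
  shows "cmat (E m) *v (transition M t *v u) = exp (- \<i> * complex_of_real (t * m)) *s (cmat (E m) *v u)"
proof -
  define z where "z l = exp (- \<i> * complex_of_real (t * l))" for l
  have "(cmat (E m) ** transition M t) $ i $ k = z m * complex_of_real (E m $ i $ k)" for i k
  proof -
    have "(cmat (E m) ** transition M t) $ i $ k
        = (\<Sum>l\<in>Lam. z l * complex_of_real (\<Sum>j\<in>UNIV. E m $ i $ j * E l $ j $ k))"
      by (simp add: matrix_matrix_mult_def cmat_def transition_spectral[OF sd] z_def
          sum_distrib_left sum.swap[of _ UNIV] mult_ac)
    also have "\<dots> = (\<Sum>l\<in>Lam. z l * complex_of_real (if m = l then E m $ i $ k else 0))"
      by (intro sum.cong refl) (simp add: spectral_decomp_mult_entry[OF sd m])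
    also have "\<dots> = z m * complex_of_real (E m $ i $ k)"
      using m spectral_decomp_finite[OF sd] by (simp add: if_distrib sum.delta cong: if_cong)
    finally show ?thesis .
  qed
  then have "((cmat (E m) ** transition M t) *v u) $ i = z m * (cmat (E m) *v u) $ i" for i
    unfolding matrix_vector_mult_def by (simp add: sum_distrib_left mult_ac cmat_def)
  then show ?thesis
    by (simp add: matrix_vector_mul_assoc vec_eq_iff z_def)
qed

lemma matrix_vector_mult_evec: "((A::'a::comm_ring_1^'n^'m) *v evec a) $ i = A $ i $ a"
  by (simp add: matrix_vector_mult_def evec_def axis_def if_distrib cong: if_cong)

lemma evec_nth: "(evec a :: 'a::zero_neq_one^'n) $ i = (if i = a then 1 else 0)"
  by (simp add: evec_def axis_def)

lemma transition_evec_spectral_entry: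
  assumes sd: "spectral_decomp M Lam E" and m: "m \<in> Lam"
    and U: "transition M t *v evec a = eta *s evec b"
  shows "exp (- \<i> * complex_of_real (t * m)) * complex_of_real (E m $ i $ a)
         = eta * complex_of_real (E m $ i $ b)"
  using arg_cong[where f = "\<lambda>x. (cmat (E m) *v x) $ i", OF U]
  unfolding spectral_projection_transition[OF sd m]
  by (simp add: vector_scalar_commute matrix_vector_mult_evec cmat_def)

lemma transition_phase_on_common_support:
  assumes sd: "spectral_decomp M Lam E" and U: "transition M t *v evec a = eta *s evec b"
    and l: "l \<in> Lam" and eq: "E l *v evec a = E l *v evec b" and nz: "E l *v evec a \<noteq> 0"
  shows "exp (- \<i> * complex_of_real (t * l)) = eta"
proof -
  obtain i where "E l $ i $ a \<noteq> 0"
    using nz by (auto simp: vec_eq_iff matrix_vector_mult_evec)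
  moreover have "E l $ i $ a = E l $ i $ b"
    using eq by (simp add: vec_eq_iff matrix_vector_mult_evec)
  ultimately show ?thesis
    using transition_evec_spectral_entry[OF sd l U, of i] by simp
qed

lemma eig_support_evec_nonempty:
  assumes "spectral_decomp M Lam E"
  shows "eig_support Lam E (evec v) \<noteq> {}"
proof
  assume "eig_support Lam E (evec v) = {}"
  then have "(\<Sum>l\<in>Lam. E l $ v $ v) = 0"
    by (auto simp: eig_support_def vec_eq_iff matrix_vector_mult_evec)
  then show False
    using spectral_decomp_sum_entry[OF assms, of v v] by simp
qed

text \<open>
  Comparing \<open>b\<close>-th entries gives \<open>|E\<^sub>m(b,a)| = |E\<^sub>m(b,b)|\<close>; equality with a nonzero value
  forces the phase of \<open>m\<close> to be \<open>\<eta>\<close> and hence \<open>m \<in> \<Phi>\<^sup>+\<close>. So if \<open>\<Phi>\<^sup>+\<close> were empty, then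
  \<open>E\<^sub>m(b,a) = -E\<^sub>m(b,b)\<close> for all \<open>m\<close>, and summing over \<open>m\<close> would give \<open>0 = -1\<close>.
\<close>
lemma eig_support_plus_nonempty_if_pst:
  assumes sd: "spectral_decomp M Lam E" and pst: "pst M (evec a) (evec b) t" and ab: "a \<noteq> b"
  shows "eig_support_plus Lam E a b \<noteq> {}"
proof
  assume empty: "eig_support_plus Lam E a b = {}"
  obtain eta where eta: "cmod eta = 1" and U: "transition M t *v evec a = eta *s evec b"
    using pst unfolding pst_def by blast
  have opposite: "E m $ b $ a = - E m $ b $ b" if m: "m \<in> Lam" for m
  proof -
    define z where "z = exp (- \<i> * complex_of_real (t * m))"
    have entry: "z * complex_of_real (E m $ i $ a) = eta * complex_of_real (E m $ i $ b)" for i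
      unfolding z_def by (rule transition_evec_spectral_entry[OF sd m U])
    have "cmod z = 1"
      by (simp add: z_def norm_exp_eq_Re)
    then have abs_eq: "\<bar>E m $ b $ a\<bar> = \<bar>E m $ b $ b\<bar>"
      using arg_cong[OF entry[of b], of cmod] eta by (simp add: norm_mult)
    have "\<not> (E m $ b $ a = E m $ b $ b \<and> E m $ b $ b \<noteq> 0)"
    proof
      assume same: "E m $ b $ a = E m $ b $ b \<and> E m $ b $ b \<noteq> 0"
      then have "z = eta"
        using entry[of b] by simp
      with \<open>cmod z = 1\<close> have "E m $ i $ a = E m $ i $ b" for i
        using entry[of i] by auto
      then have "m \<in> eig_support_plus Lam E a b"
        using m same by (auto simp: eig_support_plus_def vec_eq_iff matrix_vector_mult_evec)
      with empty show False
        by simp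
    qed
    with abs_eq show ?thesis
      by (auto simp: abs_if split: if_splits)
  qed
  have "(\<Sum>m\<in>Lam. E m $ b $ a) = - (\<Sum>m\<in>Lam. E m $ b $ b)"
    by (simp add: opposite sum_negf)
  with ab show False
    by (simp add: spectral_decomp_sum_entry[OF sd])
qed

lemma pst_add_periodic_iff:
  assumes Ua: "transition M t *v evec a = eta *s evec b" and eta: "cmod eta = 1"
    and Uv: "transition M t *v evec v = gam *s evec v" and vb: "v \<noteq> b" and c: "c \<noteq> 0"
  shows "pst M (evec a + c *s evec v) (evec b + c *s evec v) t \<longleftrightarrow> eta = gam"
proof
  assume "pst M (evec a + c *s evec v) (evec b + c *s evec v) t"
  then obtain e where "transition M t *v (evec a + c *s evec v) = e *s (evec b + c *s evec v)"
    unfolding pst_def by blast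
  then have image: "eta *s evec b + c *s (gam *s evec v) = e *s (evec b + c *s evec v)"
    by (simp add: matrix_vector_right_distrib vector_scalar_commute Ua Uv)
  have "eta = e"
    using arg_cong[where f = "\<lambda>x. x $ b", OF image] vb by (simp add: evec_nth)
  moreover have "gam = e"
    using arg_cong[where f = "\<lambda>x. x $ v", OF image] vb c by (simp add: evec_nth)
  ultimately show "eta = gam"
    by simp
next
  assume "eta = gam"
  then have "transition M t *v (evec a + c *s evec v) = eta *s (evec b + c *s evec v)"
    by (simp add: matrix_vector_right_distrib vector_scalar_commute Ua Uv vector_add_ldistrib
        mult_ac)
  with eta show "pst M (evec a + c *s evec v) (evec b + c *s evec v) t"
    unfolding pst_def by blast
qed

lemma exp_minus_ii_eq_iff:
  "exp (- \<i> * complex_of_real x) = exp (- \<i> * complex_of_real y)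
   \<longleftrightarrow> (\<exists>k::int. x - y = 2 * pi * of_int k)"
proof -
  have "(- \<i> * complex_of_real x = - \<i> * complex_of_real y + (of_int (2 * n) * pi) * \<i>)
        \<longleftrightarrow> x - y = 2 * pi * of_int (- n)" for n :: int
    by (auto simp: complex_eq_iff algebra_simps)
  then show ?thesis
    unfolding exp_eq by (metis minus_minus)
qed

theorem mainTheorem7:
  fixes M :: "real^'n^'n" and Lam :: "real set" and E :: "real \<Rightarrow> real^'n^'n"
    and a alpha v :: 'n and tau s :: real
  assumes sym: "transpose M = M"
    and algint: "\<forall>i j. algebraic_int (M $ i $ j)"
    and sd: "spectral_decomp M Lam E"
    and aa: "alpha \<noteq> a"
    and pst_a: "pst M (evec a) (evec alpha) tau"
    and va: "v \<noteq> a" and valpha: "v \<noteq> alpha"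
    and per: "periodic_vertex M v tau"
    and s_rat: "s \<in> \<rat>" and s_nz: "s \<noteq> 0"
  shows "pst M (evec a + complex_of_real s *s evec v) (evec alpha + complex_of_real s *s evec v) tau
         \<longleftrightarrow> (\<exists>l \<in> eig_support_plus Lam E a alpha. \<exists>l' \<in> eig_support Lam E (evec v).
                \<exists>k::int. l * tau - l' * tau = 2 * pi * of_int k)"
proof -
  define phase where "phase l = exp (- \<i> * complex_of_real (tau * l))" for l
  obtain eta where eta: "cmod eta = 1" and Ua: "transition M tau *v evec a = eta *s evec alpha"
    using pst_a unfolding pst_def by blast
  obtain gam where Uv: "transition M tau *v evec v = gam *s evec v"
    using per unfolding periodic_vertex_def by blast
  have phase_plus: "phase l = eta" if "l \<in> eig_support_plus Lam E a alpha" for l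
    using that transition_phase_on_common_support[OF sd Ua]
    unfolding phase_def eig_support_plus_def by blast
  have phase_v: "phase l = gam" if "l \<in> eig_support Lam E (evec v)" for l
    using that transition_phase_on_common_support[OF sd Uv]
    unfolding phase_def eig_support_def by blast
  have phase_eq_iff: "phase l = phase l' \<longleftrightarrow> (\<exists>k::int. l * tau - l' * tau = 2 * pi * of_int k)"
    for l l'
    unfolding phase_def exp_minus_ii_eq_iff by (simp add: mult.commute)
  have "pst M (evec a + complex_of_real s *s evec v) (evec alpha + complex_of_real s *s evec v) tau
        \<longleftrightarrow> eta = gam"
    using pst_add_periodic_iff[OF Ua eta Uv valpha] s_nz by simp
  also have "\<dots> \<longleftrightarrow> (\<exists>l \<in> eig_support_plus Lam E a alpha. \<exists>l' \<in> eig_support Lam E (evec v).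
                      phase l = phase l')"
    using eig_support_plus_nonempty_if_pst[OF sd pst_a aa[symmetric]]
      eig_support_evec_nonempty[OF sd, of v] phase_plus phase_v by fastforce
  finally show ?thesis
    by (simp only: phase_eq_iff)
qed

end
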